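(* Let $X$ satisfy (P1) and (P2), and let $\alpha$ be a saddle connection on $X$ which is neither a side nor a diagonal of a polygon, with polygonal decomposition $\alpha=\alpha_1\cup\dots\cup\alpha_k$. Then \[ \left\lceil \tfrac{k}{2}\right\rceil \le p_\alpha+q_\alpha, \] with equality if and only if $\alpha$ is odd.
   Context: $X$ is a translation surface obtained from finitely many Euclidean polygons by gluing pairs of parallel sides of equal length by translations, with (P1): each polygon convex with all angles obtuse or right; (P2): no two sides of the same polygon are identified. Saddle connection: straight segment between singularities (images of vertices) with none in its interior; a diagonal is a segment inside a polygon joining two non-adjacent vertices. Polygonal decomposition: cut $\alpha$ each time it passes from one polygon to another, giving consecutive segments $\alpha_1,\dots,\alpha_k$ ($k\ge2$ here), each in one polygon; $\alpha_1$ and $\alpha_k$ are non-adjacent. A segment in polygon $P$ is adjacent if it goes from the relative interior of a side $e$ of $P$ to the relative interior of a side adjacent to $e$; otherwise non-adjacent. $p_\alpha$ = number of non-adjacent segments; $q_\alpha=\sum\lfloor r/2\rfloor$ over maximal runs of consecutive adjacent segments of size $r$. $\alpha$ is odd if no two non-adjacent segments are consecutive and between any two consecutive non-adjacent segments there is an odd number of adjacent segments. *)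

theory Defs
  imports "HOL-Analysis.Analysis"
begin

text \<open>Points of the plane are complex numbers.  A polygon is the list of its
vertices in counterclockwise order; vertex j is read modulo the length.
Side j of a polygon goes from vertex j to vertex j+1.\<close>

definition cross2 :: "complex \<Rightarrow> complex \<Rightarrow> real" where
  "cross2 u w = Im (cnj u * w)"

definition dot2 :: "complex \<Rightarrow> complex \<Rightarrow> real" where
  "dot2 u w = Re (cnj u * w)"

definition vtx :: "complex list \<Rightarrow> nat \<Rightarrow> complex" where
  "vtx v j = v ! (j mod length v)"

definition edge_vec :: "complex list \<Rightarrow> nat \<Rightarrow> complex" where
  "edge_vec v j = vtx v (Suc j) - vtx v j"

definition side_relint :: "complex list \<Rightarrow> nat \<Rightarrow> complex set" where
  "side_relint v j = open_segment (vtx v j) (vtx v (Suc j))"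

definition region :: "complex list \<Rightarrow> complex set" where
  "region v = convex hull (set v)"

text \<open>(P1): convex polygon (strictly convex corners, counterclockwise),
all angles obtuse or right.\<close>
definition P1_polygon :: "complex list \<Rightarrow> bool" where
  "P1_polygon v \<longleftrightarrow> length v \<ge> 3 \<and>
     (\<forall>j<length v. \<forall>l<length v. l \<noteq> j \<and> l \<noteq> Suc j mod length v \<longrightarrow>
         cross2 (edge_vec v j) (v ! l - v ! j) > 0) \<and>
     (\<forall>j<length v. dot2 (vtx v (j + length v - 1) - v ! j) (vtx v (Suc j) - v ! j) \<le> 0)"

text \<open>Translation surface given by N polygons P 0,...,P (N-1) and a pairing
sigma of their sides (side (i,j) = side j of polygon i).  Paired sides are
parallel of equal length, glued by a translation (orientation-compatible,
hence opposite edge vectors for counterclockwise polygons).\<close>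
definition translation_surface ::
  "nat \<Rightarrow> (nat \<Rightarrow> complex list) \<Rightarrow> (nat \<times> nat \<Rightarrow> nat \<times> nat) \<Rightarrow> bool" where
  "translation_surface N P \<sigma> \<longleftrightarrow>
     (\<forall>i<N. length (P i) \<ge> 3) \<and>
     (\<forall>i<N. \<forall>j<length (P i).
        fst (\<sigma> (i, j)) < N \<and> snd (\<sigma> (i, j)) < length (P (fst (\<sigma> (i, j)))) \<and>
        \<sigma> (i, j) \<noteq> (i, j) \<and> \<sigma> (\<sigma> (i, j)) = (i, j) \<and>
        edge_vec (P (fst (\<sigma> (i, j)))) (snd (\<sigma> (i, j))) = - edge_vec (P i) j)"

definition P1 :: "nat \<Rightarrow> (nat \<Rightarrow> complex list) \<Rightarrow> bool" where
  "P1 N P \<longleftrightarrow> (\<forall>i<N. P1_polygon (P i))"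

definition P2 :: "nat \<Rightarrow> (nat \<Rightarrow> complex list) \<Rightarrow> (nat \<times> nat \<Rightarrow> nat \<times> nat) \<Rightarrow> bool" where
  "P2 N P \<sigma> \<longleftrightarrow> (\<forall>i<N. \<forall>j<length (P i). fst (\<sigma> (i, j)) \<noteq> i)"

definition glue_shift ::
  "(nat \<Rightarrow> complex list) \<Rightarrow> (nat \<times> nat \<Rightarrow> nat \<times> nat) \<Rightarrow> nat \<Rightarrow> nat \<Rightarrow> complex" where
  "glue_shift P \<sigma> i j = vtx (P (fst (\<sigma> (i, j)))) (Suc (snd (\<sigma> (i, j)))) - vtx (P i) j"

text \<open>A saddle connection, given through its polygonal decomposition: pieces
m = 1..k, piece m being the segment from a m to b m in polygon P (pg m).  For k = 1 the segment lies in the polygon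
(a side or a diagonal); for k \<ge> 2 each piece crosses the interior of its
polygon.\<close>
definition saddle_connection ::
  "nat \<Rightarrow> (nat \<Rightarrow> complex list) \<Rightarrow> (nat \<times> nat \<Rightarrow> nat \<times> nat) \<Rightarrow>
   nat \<Rightarrow> (nat \<Rightarrow> nat) \<Rightarrow> (nat \<Rightarrow> complex) \<Rightarrow> (nat \<Rightarrow> complex) \<Rightarrow> bool" where
  "saddle_connection N P \<sigma> k pg a b \<longleftrightarrow>
     k \<ge> 1 \<and>
     (\<forall>m\<in>{1..k}. pg m < N \<and> a m \<noteq> b m \<and>
         closed_segment (a m) (b m) \<subseteq> region (P (pg m)) \<and>
         open_segment (a m) (b m) \<inter> set (P (pg m)) = {}) \<and>
     a 1 \<in> set (P (pg 1)) \<and> b k \<in> set (P (pg k)) \<and>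
     (\<exists>d. d \<noteq> 0 \<and> (\<forall>m\<in>{1..k}. \<exists>t>0. b m - a m = complex_of_real t * d)) \<and>
     (k \<ge> 2 \<longrightarrow> (\<forall>m\<in>{1..k}. open_segment (a m) (b m) \<subseteq> interior (region (P (pg m))))) \<and>
     (\<forall>m\<in>{1..<k}. \<exists>j<length (P (pg m)).
         b m \<in> side_relint (P (pg m)) j \<and>
         pg (Suc m) = fst (\<sigma> (pg m, j)) \<and>
         a (Suc m) = b m + glue_shift P \<sigma> (pg m) j)"

definition is_side ::
  "(nat \<Rightarrow> complex list) \<Rightarrow> nat \<Rightarrow> (nat \<Rightarrow> nat) \<Rightarrow> (nat \<Rightarrow> complex) \<Rightarrow> (nat \<Rightarrow> complex) \<Rightarrow> bool" where
  "is_side P k pg a b \<longleftrightarrow> k = 1 \<and>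
     (\<exists>j<length (P (pg 1)).
        {a 1, b 1} = {vtx (P (pg 1)) j, vtx (P (pg 1)) (Suc j)})"

definition is_diagonal ::
  "(nat \<Rightarrow> complex list) \<Rightarrow> nat \<Rightarrow> (nat \<Rightarrow> nat) \<Rightarrow> (nat \<Rightarrow> complex) \<Rightarrow> (nat \<Rightarrow> complex) \<Rightarrow> bool" where
  "is_diagonal P k pg a b \<longleftrightarrow> k = 1 \<and>
     closed_segment (a 1) (b 1) \<subseteq> region (P (pg 1)) \<and>
     (\<exists>j<length (P (pg 1)). \<exists>l<length (P (pg 1)).
        a 1 = P (pg 1) ! j \<and> b 1 = P (pg 1) ! l \<and> l \<noteq> j \<and>
        l \<noteq> Suc j mod length (P (pg 1)) \<and> j \<noteq> Suc l mod length (P (pg 1)))"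

definition adjacent_piece ::
  "(nat \<Rightarrow> complex list) \<Rightarrow> (nat \<Rightarrow> nat) \<Rightarrow> (nat \<Rightarrow> complex) \<Rightarrow> (nat \<Rightarrow> complex) \<Rightarrow> nat \<Rightarrow> bool" where
  "adjacent_piece P pg a b m \<longleftrightarrow>
     (\<exists>j<length (P (pg m)). \<exists>j'<length (P (pg m)).
        a m \<in> side_relint (P (pg m)) j \<and> b m \<in> side_relint (P (pg m)) j' \<and>
        (j' = Suc j mod length (P (pg m)) \<or> j = Suc j' mod length (P (pg m))))"

definition p_alpha :: "nat \<Rightarrow> (nat \<Rightarrow> bool) \<Rightarrow> nat" where
  "p_alpha k adj = card {m\<in>{1..k}. \<not> adj m}"

definition max_runs :: "nat \<Rightarrow> (nat \<Rightarrow> bool) \<Rightarrow> (nat \<times> nat) set" where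
  "max_runs k adj = {(s, t). 1 \<le> s \<and> s \<le> t \<and> t \<le> k \<and> (\<forall>m\<in>{s..t}. adj m) \<and>
       (s = 1 \<or> \<not> adj (s - 1)) \<and> (t = k \<or> \<not> adj (Suc t))}"

definition q_alpha :: "nat \<Rightarrow> (nat \<Rightarrow> bool) \<Rightarrow> nat" where
  "q_alpha k adj = (\<Sum>(s, t)\<in>max_runs k adj. (t - s + 1) div 2)"

definition odd_sc :: "nat \<Rightarrow> (nat \<Rightarrow> bool) \<Rightarrow> bool" where
  "odd_sc k adj \<longleftrightarrow>
     (\<forall>m\<in>{1..<k}. \<not> (\<not> adj m \<and> \<not> adj (Suc m))) \<and>
     (\<forall>m1 m2. 1 \<le> m1 \<and> m1 < m2 \<and> m2 \<le> k \<and> \<not> adj m1 \<and> \<not> adj m2 \<and>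
         (\<forall>m. m1 < m \<and> m < m2 \<longrightarrow> adj m) \<longrightarrow> odd (m2 - m1 - 1))"

end

theory Submission imports Defs begin

text \<open>Only two geometric facts enter: the first and the last piece of a
saddle connection start resp. end at a vertex, and by strict convexity a vertex
never lies in the relative interior of a side, so both end pieces are
non-adjacent.  The rest is combinatorics of the 0/1 word recording which pieces
are adjacent.  Induct on the last non-adjacent piece before the final one: if
it is piece m0 and the gap between them has g adjacent pieces, then p grows by
1 and q by g div 2, so 2(p+q) grows by at least g+1 = k-m0, with equality
exactly when g is odd.  Hence 2(p+q) \<ge> k+1, with equality iff every gap is
odd, i.e. iff \<alpha> is odd.\<close>

lemma vertex_notin_side_relint:
  assumes "P1_polygon v" "x \<in> set v" "j < length v"
  shows "x \<notin> side_relint v j"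
proof
  assume x: "x \<in> side_relint v j"
  obtain l where l: "l < length v" "x = v ! l" using assms(2) by (auto simp: in_set_conv_nth)
  have vj: "vtx v j = v ! j" using assms(3) by (simp add: vtx_def)
  have vs: "vtx v (Suc j) = v ! (Suc j mod length v)" by (simp add: vtx_def)
  from x obtain u where u: "x = (1 - u) *\<^sub>R vtx v j + u *\<^sub>R vtx v (Suc j)"
    unfolding side_relint_def in_segment by blast
  have "l \<noteq> j" "l \<noteq> Suc j mod length v"
    using x l vj vs by (auto simp: side_relint_def open_segment_def)
  then have "cross2 (edge_vec v j) (v ! l - v ! j) > 0"
    using assms(1,3) l(1) unfolding P1_polygon_def by blast
  moreover have "v ! l - v ! j = u *\<^sub>R edge_vec v j"
    using u l vj by (simp add: edge_vec_def algebra_simps)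
  then have "cross2 (edge_vec v j) (v ! l - v ! j) = 0"
    by (simp add: cross2_def scaleR_conv_of_real)
  ultimately show False by simp
qed

lemma saddle_connection_ends_not_adjacent:
  assumes "P1 N P" "saddle_connection N P \<sigma> k pg a b"
  shows "1 \<le> k" "\<not> adjacent_piece P pg a b 1" "\<not> adjacent_piece P pg a b k"
proof -
  note sc = assms(2)[unfolded saddle_connection_def]
  show k: "1 \<le> k" using sc by blast
  have poly: "P1_polygon (P (pg m))" if "m \<in> {1..k}" for m
    using assms(1) sc that by (simp add: P1_def)
  show "\<not> adjacent_piece P pg a b 1" "\<not> adjacent_piece P pg a b k"
    using vertex_notin_side_relint[OF poly] sc k unfolding adjacent_piece_def by auto
qed

lemma finite_max_runs: "finite (max_runs k adj)"
  by (rule finite_subset[of _ "{1..k} \<times> {1..k}"]) (auto simp: max_runs_def)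

lemma p_alpha_extend:
  assumes "\<not> adj k" "1 \<le> m0" "m0 < k" "\<not> adj m0"
    and "\<And>m. m0 < m \<Longrightarrow> m < k \<Longrightarrow> adj m"
  shows "p_alpha k adj = p_alpha m0 adj + 1"
proof -
  have "{m\<in>{1..k}. \<not> adj m} = insert k {m\<in>{1..m0}. \<not> adj m}"
    using assms by (auto simp: not_le intro: leI)
  then show ?thesis using assms(3) unfolding p_alpha_def by simp
qed

lemma max_runs_extend:
  assumes "\<not> adj k" "1 \<le> m0" "m0 < k" "\<not> adj m0"
    and btw: "\<And>m. m0 < m \<Longrightarrow> m < k \<Longrightarrow> adj m"
  shows "max_runs k adj = max_runs m0 adj \<union> (if m0 + 1 < k then {(m0 + 1, k - 1)} else {})"
    (is "_ = _ \<union> ?R")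
proof (intro equalityI subsetI)
  fix x assume "x \<in> max_runs k adj"
  then obtain s t where st: "x = (s, t)" and h: "1 \<le> s" "s \<le> t" "t \<le> k"
    "\<forall>m\<in>{s..t}. adj m" "s = 1 \<or> \<not> adj (s - 1)" "t = k \<or> \<not> adj (Suc t)"
    by (auto simp: max_runs_def)
  have "t < k" "t \<noteq> m0" using h assms(1,4) by (auto simp: le_less)
  show "x \<in> max_runs m0 adj \<union> ?R"
  proof (cases "t < m0")
    case True
    then show ?thesis using h st \<open>t < k\<close> unfolding max_runs_def by auto
  next
    case False
    with \<open>t \<noteq> m0\<close> have "m0 < t" by simp
    moreover have "m0 < s" using h assms(4) \<open>m0 < t\<close> by (meson atLeastAtMost_iff not_le less_imp_le)
    moreover have "s = m0 + 1" using h btw \<open>m0 < s\<close> \<open>t < k\<close> by (cases "s = m0 + 1") auto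
    moreover have "t = k - 1" using h btw \<open>m0 < t\<close> \<open>t < k\<close> by (cases "t = k - 1") auto
    ultimately show ?thesis using st by auto
  qed
next
  fix x assume "x \<in> max_runs m0 adj \<union> ?R"
  then show "x \<in> max_runs k adj"
    using assms by (auto simp: max_runs_def split: if_splits)
qed

lemma q_alpha_extend:
  assumes "\<not> adj k" "1 \<le> m0" "m0 < k" "\<not> adj m0"
    and "\<And>m. m0 < m \<Longrightarrow> m < k \<Longrightarrow> adj m"
  shows "q_alpha k adj = q_alpha m0 adj + (k - m0 - 1) div 2"
proof -
  let ?R = "if m0 + 1 < k then {(m0 + 1, k - 1)} else {}"
  have runs: "max_runs k adj = max_runs m0 adj \<union> ?R"
    by (rule max_runs_extend[OF assms(1-4)], rule assms(5))
  have "max_runs m0 adj \<inter> ?R = {}" unfolding max_runs_def by auto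
  then have "q_alpha k adj = q_alpha m0 adj + (\<Sum>(s, t)\<in>?R. (t - s + 1) div 2)"
    unfolding q_alpha_def runs by (intro sum.union_disjoint finite_max_runs) simp_all
  then show ?thesis by auto
qed

lemma odd_sc_extend:
  assumes nk: "\<not> adj k" and m0: "1 \<le> m0" "m0 < k" "\<not> adj m0"
    and btw: "\<And>m. m0 < m \<Longrightarrow> m < k \<Longrightarrow> adj m"
  shows "odd_sc k adj \<longleftrightarrow> odd_sc m0 adj \<and> odd (k - m0 - 1)"
proof
  assume "odd_sc k adj"
  then show "odd_sc m0 adj \<and> odd (k - m0 - 1)"
    using assms unfolding odd_sc_def by (auto 4 3 dest: spec[of _ m0] spec[of _ k])
next
  assume o: "odd_sc m0 adj \<and> odd (k - m0 - 1)"
  then have gap: "m0 + 1 < k" by (cases "m0 + 1 < k") auto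
  have no_consecutive: "\<not> (\<not> adj m \<and> \<not> adj (Suc m))" if "m \<in> {1..<k}" for m
    using o btw gap that unfolding odd_sc_def
    by (cases "m < m0"; cases "m = m0") auto
  have odd_gap: "odd (m2 - m1 - 1)"
    if h: "1 \<le> m1" "m1 < m2" "m2 \<le> k" "\<not> adj m1" "\<not> adj m2" "\<forall>m. m1 < m \<and> m < m2 \<longrightarrow> adj m"
    for m1 m2
  proof (cases "m2 \<le> m0")
    case True
    then show ?thesis using o h unfolding odd_sc_def by blast
  next
    case False
    then have "m2 = k" using h btw by (meson le_neq_implies_less not_le)
    moreover have "m1 = m0" using h m0 btw \<open>m2 = k\<close> by (meson linorder_neqE_nat)
    ultimately show ?thesis using o by simp
  qed
  show "odd_sc k adj" unfolding odd_sc_def using no_consecutive odd_gap by blast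
qed

lemma p_alpha_q_alpha_bound:
  fixes adj :: "nat \<Rightarrow> bool"
  assumes "1 \<le> k" "\<not> adj 1" "\<not> adj k"
  shows "k + 1 \<le> 2 * (p_alpha k adj + q_alpha k adj) \<and>
    (2 * (p_alpha k adj + q_alpha k adj) = k + 1 \<longleftrightarrow> odd_sc k adj)"
  using assms
proof (induction k rule: less_induct)
  case (less k)
  show ?case
  proof (cases "k = 1")
    case True
    have "{m\<in>{1..1::nat}. \<not> adj m} = {1}" "max_runs 1 adj = {}"
      using less.prems by (auto simp: max_runs_def)
    then show ?thesis using True by (simp add: p_alpha_def q_alpha_def odd_sc_def)
  next
    case False
    define S where "S = {m\<in>{1..<k}. \<not> adj m}"
    have "finite S" "1 \<in> S" using False less.prems by (auto simp: S_def)
    define m0 where "m0 = Max S"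
    have "m0 \<in> S" using \<open>finite S\<close> \<open>1 \<in> S\<close> unfolding m0_def by (intro Max_in) auto
    then have m0: "1 \<le> m0" "m0 < k" "\<not> adj m0" by (auto simp: S_def)
    have btw: "adj m" if "m0 < m" "m < k" for m
      using that Max_ge[OF \<open>finite S\<close>, of m] m0 unfolding m0_def S_def by fastforce
    note ext = less.prems(3) m0
    have IH: "m0 + 1 \<le> 2 * (p_alpha m0 adj + q_alpha m0 adj) \<and>
        (2 * (p_alpha m0 adj + q_alpha m0 adj) = m0 + 1 \<longleftrightarrow> odd_sc m0 adj)"
      using less.IH[OF m0(2) m0(1) less.prems(2) m0(3)] .
    have p: "p_alpha k adj = p_alpha m0 adj + 1"
      by (rule p_alpha_extend[OF ext], rule btw)
    have q: "q_alpha k adj = q_alpha m0 adj + (k - m0 - 1) div 2"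
      by (rule q_alpha_extend[OF ext], rule btw)
    have odd: "odd_sc k adj \<longleftrightarrow> odd_sc m0 adj \<and> odd (k - m0 - 1)"
      by (rule odd_sc_extend[OF ext], rule btw)
    define g where "g = k - m0 - 1"
    have "k = m0 + g + 1" using m0 by (simp add: g_def)
    moreover have "odd g \<Longrightarrow> 2 * (g div 2) + 1 = g" "even g \<Longrightarrow> 2 * (g div 2) = g" by presburger+
    moreover have "2 * (p_alpha k adj + q_alpha k adj) =
        2 * (p_alpha m0 adj + q_alpha m0 adj) + 2 * (g div 2) + 2"
      using p q by (simp add: g_def)
    ultimately show ?thesis
      using IH odd unfolding g_def[symmetric] by (cases "odd g") auto
  qed
qed

lemma ceiling_half_nat: "\<lceil>real k / 2\<rceil> = int ((k + 1) div 2)"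
proof (cases "even k")
  case True
  then show ?thesis by (auto elim: evenE)
next
  case False
  then obtain n where n: "k = 2 * n + 1" by (blast elim: oddE)
  then have "real k / 2 = real n + 1/2" by simp
  then show ?thesis using n by (simp add: ceiling_eq_iff)
qed

theorem mainTheorem7:
  fixes N :: nat and P :: "nat \<Rightarrow> complex list" and \<sigma> :: "nat \<times> nat \<Rightarrow> nat \<times> nat"
    and k :: nat and pg :: "nat \<Rightarrow> nat" and a b :: "nat \<Rightarrow> complex"
  assumes "translation_surface N P \<sigma>" and "P1 N P" and "P2 N P \<sigma>"
    and "saddle_connection N P \<sigma> k pg a b"
    and "\<not> is_side P k pg a b" and "\<not> is_diagonal P k pg a b"
  shows "\<lceil>real k / 2\<rceil> \<le> int (p_alpha k (adjacent_piece P pg a b) + q_alpha k (adjacent_piece P pg a b))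
    \<and> (\<lceil>real k / 2\<rceil> = int (p_alpha k (adjacent_piece P pg a b) + q_alpha k (adjacent_piece P pg a b))
         \<longleftrightarrow> odd_sc k (adjacent_piece P pg a b))"
proof -
  define S where "S = p_alpha k (adjacent_piece P pg a b) + q_alpha k (adjacent_piece P pg a b)"
  have "k + 1 \<le> 2 * S \<and> (2 * S = k + 1 \<longleftrightarrow> odd_sc k (adjacent_piece P pg a b))"
    unfolding S_def
    using p_alpha_q_alpha_bound saddle_connection_ends_not_adjacent[OF assms(2,4)] by blast
  moreover have "k + 1 \<le> 2 * S \<Longrightarrow> (k + 1) div 2 \<le> S \<and> ((k + 1) div 2 = S \<longleftrightarrow> 2 * S = k + 1)"
    by presburger
  ultimately show ?thesis unfolding S_def[symmetric] ceiling_half_nat by simp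
qed

end
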